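(* Let the premiums $\{X_n, n\geq 1\}$ and the claims $\{Y_n, n\geq 1\}$ be sequences of nonnegative, identically distributed, independent random variables with finite expectations, and suppose the sequences $\{X_n\}$ and $\{Y_n\}$ are mutually independent. Let $r>0$ be a constant and set $I_n=r$ for all $n\geq 1$. For $u\geq 0$ define $U_0=u$, $U_n=(U_{n-1}+X_n)(1+r)-Y_n$ for $n\geq 1$, and $\Psi(u)=\mathbb{P}\big(\bigcup_{n=1}^\infty\{U_n<0\}\big)$. If there exists a positive real number $R$ satisfying $$\mathbb{E}\Big(e^{R\left(Y_1(1+r)^{-1}-X_1\right)}\Big)\leq 1,$$ then $\Psi(u)\leq e^{-Ru}$ for all $u>0$. *)

theory Defs
  imports "HOL-Probability.Probability"
begin

fun surplus :: "real \<Rightarrow> real \<Rightarrow> (nat \<Rightarrow> 'a \<Rightarrow> real) \<Rightarrow> (nat \<Rightarrow> 'a \<Rightarrow> real) \<Rightarrow> nat \<Rightarrow> 'a \<Rightarrow> real" where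
  "surplus u r X Y 0 \<omega> = u"
| "surplus u r X Y (Suc n) \<omega> = (surplus u r X Y n \<omega> + X (Suc n) \<omega>) * (1 + r) - Y (Suc n) \<omega>"

definition ruin_prob :: "'a measure \<Rightarrow> real \<Rightarrow> (nat \<Rightarrow> 'a \<Rightarrow> real) \<Rightarrow> (nat \<Rightarrow> 'a \<Rightarrow> real) \<Rightarrow> real \<Rightarrow> real" where
  "ruin_prob M r X Y u0 = measure M (\<Union>n\<in>{1..}. {\<omega> \<in> space M. surplus u0 r X Y n \<omega> < 0})"

end

theory Submission
  imports Defs
begin

text \<open>With \<open>v = 1 / (1 + r)\<close> and the net claim \<open>Z\<^sub>n = Y\<^sub>n / (1 + r) - X\<^sub>n\<close>, the discounted
  surplus satisfies \<open>v\<^sup>n U\<^sub>n = v\<^sup>n\<^sup>-\<^sup>1 U\<^sub>n\<^sub>-\<^sub>1 - v\<^sup>n\<^sup>-\<^sup>1 Z\<^sub>n\<close>. Freezing it at the first ruin time gives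
  \<open>S\<^sub>n\<close>, and ruin happens by time \<open>n\<close> iff \<open>S\<^sub>n < 0\<close>. Since \<open>S\<^sub>n\<close> depends only on the first \<open>n\<close>
  periods, it is independent of \<open>Z\<^sub>n\<^sub>+\<^sub>1\<close>, and convexity of \<open>exp\<close> turns the Lundberg condition
  into \<open>E exp (t R Z) \<le> 1\<close> for \<open>t = v\<^sup>n \<in> [0, 1]\<close>. Hence \<open>E exp (- R S\<^sub>n)\<close> never exceeds its
  initial value \<open>exp (- R u)\<close>, Markov's inequality bounds \<open>P (S\<^sub>n < 0)\<close> by the same number, and the
  ruin event is the increasing union of the events \<open>S\<^sub>n < 0\<close>.\<close>

lemma exp_mult_le_convex_comb:
  fixes a t :: real
  assumes "0 \<le> t" "t \<le> 1"
  shows "exp (t * a) \<le> t * exp a + (1 - t)"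
  using convex_onD[OF exp_convex, of t 0 a] assms by (simp add: algebra_simps)

lemma (in prob_space) nn_integral_exp_mult_le_one:
  fixes f :: "'a \<Rightarrow> real"
  assumes f[measurable]: "f \<in> borel_measurable M"
    and le_one: "(\<integral>\<^sup>+\<omega>. exp (f \<omega>) \<partial>M) \<le> 1"
    and t: "0 \<le> t" "t \<le> 1"
  shows "(\<integral>\<^sup>+\<omega>. exp (t * f \<omega>) \<partial>M) \<le> 1"
proof -
  have "(\<integral>\<^sup>+\<omega>. exp (t * f \<omega>) \<partial>M) \<le> (\<integral>\<^sup>+\<omega>. ennreal t * exp (f \<omega>) + ennreal (1 - t) \<partial>M)"
    using exp_mult_le_convex_comb[OF t] t
    by (intro nn_integral_mono) (simp add: ennreal_mult[symmetric] ennreal_plus[symmetric] del: ennreal_plus)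
  also have "\<dots> = ennreal t * (\<integral>\<^sup>+\<omega>. exp (f \<omega>) \<partial>M) + ennreal (1 - t)"
    by (simp add: nn_integral_add nn_integral_cmult emeasure_space_1)
  also have "\<dots> \<le> ennreal t * 1 + ennreal (1 - t)"
    by (intro add_mono mult_left_mono le_one) auto
  also have "\<dots> = 1"
    using t by (simp add: ennreal_plus[symmetric] del: ennreal_plus)
  finally show ?thesis .
qed

lemma nn_integral_comp_eq_if_distr_eq:
  fixes f :: "'b \<Rightarrow> ennreal"
  assumes "A \<in> measurable M N" "B \<in> measurable M N" "distr M N A = distr M N B"
    and "f \<in> borel_measurable N"
  shows "(\<integral>\<^sup>+\<omega>. f (A \<omega>) \<partial>M) = (\<integral>\<^sup>+\<omega>. f (B \<omega>) \<partial>M)"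
proof -
  have "(\<integral>\<^sup>+\<omega>. f (A \<omega>) \<partial>M) = (\<integral>\<^sup>+x. f x \<partial>distr M N A)"
    using assms by (intro nn_integral_distr[symmetric]) auto
  also have "\<dots> = (\<integral>\<^sup>+\<omega>. f (B \<omega>) \<partial>M)"
    unfolding assms(3) using assms by (intro nn_integral_distr) auto
  finally show ?thesis .
qed

lemma (in prob_space) indep_vars_nn_integral_mult:
  fixes f g :: "('i \<Rightarrow> 'b) \<Rightarrow> ennreal"
  assumes indep: "indep_vars (\<lambda>_. N) X I" and JK: "J \<subseteq> I" "K \<subseteq> I" "J \<inter> K = {}"
    and f: "f \<in> borel_measurable (PiM J (\<lambda>_. N))" "\<And>x. f (restrict x J) = f x"
    and g: "g \<in> borel_measurable (PiM K (\<lambda>_. N))" "\<And>x. g (restrict x K) = g x"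
  shows "(\<integral>\<^sup>+\<omega>. f (\<lambda>i. X i \<omega>) * g (\<lambda>i. X i \<omega>) \<partial>M) =
         (\<integral>\<^sup>+\<omega>. f (\<lambda>i. X i \<omega>) \<partial>M) * (\<integral>\<^sup>+\<omega>. g (\<lambda>i. X i \<omega>) \<partial>M)"
proof -
  let ?B = "\<lambda>b. if b then J else K" and ?h = "\<lambda>b. if b then f else g"
  have "indep_vars (\<lambda>b. PiM (?B b) (\<lambda>_. N)) (\<lambda>b \<omega>. restrict (\<lambda>i. X i \<omega>) (?B b)) UNIV"
    using JK by (intro indep_vars_restrict[OF indep]) (auto simp: disjoint_family_on_def)
  then have "indep_vars (\<lambda>_. borel) (\<lambda>b \<omega>. ?h b (restrict (\<lambda>i. X i \<omega>) (?B b))) UNIV"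
    by (rule indep_vars_compose2) (use f g in auto)
  from indep_vars_nn_integral[OF _ this] show ?thesis
    by (simp add: UNIV_bool f(2) g(2)) (simp add: mult.commute)
qed

lemma (in prob_space) nn_integral_indep_pair_cong:
  fixes f g :: "'b \<Rightarrow> ennreal"
  assumes indep: "indep_vars (\<lambda>_. N) X I"
    and ij: "i \<in> I" "j \<in> I" "i \<noteq> j" and ij': "i' \<in> I" "j' \<in> I" "i' \<noteq> j'"
    and distr_i: "distr M N (X i) = distr M N (X i')"
    and distr_j: "distr M N (X j) = distr M N (X j')"
    and [measurable]: "f \<in> borel_measurable N" "g \<in> borel_measurable N"
  shows "(\<integral>\<^sup>+\<omega>. f (X i \<omega>) * g (X j \<omega>) \<partial>M) = (\<integral>\<^sup>+\<omega>. f (X i' \<omega>) * g (X j' \<omega>) \<partial>M)"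
proof -
  have X[measurable]: "k \<in> I \<Longrightarrow> X k \<in> measurable M N" for k
    using indep by (simp add: indep_vars_def)
  have factor: "(\<integral>\<^sup>+\<omega>. f (X k \<omega>) * g (X l \<omega>) \<partial>M) = (\<integral>\<^sup>+\<omega>. f (X k \<omega>) \<partial>M) * (\<integral>\<^sup>+\<omega>. g (X l \<omega>) \<partial>M)"
    if "k \<in> I" "l \<in> I" "k \<noteq> l" for k l
    using indep_vars_nn_integral_mult[OF indep, of "{k}" "{l}" "\<lambda>x. f (x k)" "\<lambda>x. g (x l)"] that
    by simp
  have "(\<integral>\<^sup>+\<omega>. f (X i \<omega>) \<partial>M) = (\<integral>\<^sup>+\<omega>. f (X i' \<omega>) \<partial>M)"
    using ij ij' by (intro nn_integral_comp_eq_if_distr_eq[OF X X distr_i]) auto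
  moreover have "(\<integral>\<^sup>+\<omega>. g (X j \<omega>) \<partial>M) = (\<integral>\<^sup>+\<omega>. g (X j' \<omega>) \<partial>M)"
    using ij ij' by (intro nn_integral_comp_eq_if_distr_eq[OF X X distr_j]) auto
  ultimately show ?thesis
    by (simp add: factor[OF ij] factor[OF ij'])
qed

text \<open>A sample path of the model is one vector \<open>x\<close> indexed like the independence hypothesis:
  \<open>x (Inl n)\<close> is the premium \<open>X\<^sub>n\<close>, paid at the start of period \<open>n\<close>, and \<open>x (Inr n)\<close> is the
  claim \<open>Y\<^sub>n\<close>, paid at its end; the net claim is their balance valued at the start of the period.\<close>

definition net_claim :: "real \<Rightarrow> (nat + nat \<Rightarrow> real) \<Rightarrow> nat \<Rightarrow> real" where
  "net_claim r x n = x (Inr n) / (1 + r) - x (Inl n)"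

fun stopped_discounted_surplus :: "real \<Rightarrow> real \<Rightarrow> nat \<Rightarrow> (nat + nat \<Rightarrow> real) \<Rightarrow> real" where
  "stopped_discounted_surplus u r 0 x = u"
| "stopped_discounted_surplus u r (Suc k) x =
    (if stopped_discounted_surplus u r k x < 0 then stopped_discounted_surplus u r k x
     else stopped_discounted_surplus u r k x - (1 / (1 + r)) ^ k * net_claim r x (Suc k))"

lemma measurable_stopped_discounted_surplus:
  assumes "\<And>j. j \<in> {1..k} \<Longrightarrow> (\<lambda>\<omega>. x \<omega> (Inl j)) \<in> borel_measurable N"
    and "\<And>j. j \<in> {1..k} \<Longrightarrow> (\<lambda>\<omega>. x \<omega> (Inr j)) \<in> borel_measurable N"
  shows "(\<lambda>\<omega>. stopped_discounted_surplus u r k (x \<omega>)) \<in> borel_measurable N"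
  using assms
proof (induction k)
  case (Suc k)
  have [measurable]: "(\<lambda>\<omega>. x \<omega> (Inl (Suc k))) \<in> borel_measurable N"
    "(\<lambda>\<omega>. x \<omega> (Inr (Suc k))) \<in> borel_measurable N"
    using Suc.prems by auto
  have [measurable]: "(\<lambda>\<omega>. stopped_discounted_surplus u r k (x \<omega>)) \<in> borel_measurable N"
    using Suc by auto
  have [measurable]: "(\<lambda>\<omega>. net_claim r (x \<omega>) (Suc k)) \<in> borel_measurable N"
    unfolding net_claim_def by measurable
  show ?case by simp measurable
qed simp

lemma stopped_discounted_surplus_restrict:
  assumes "Inl ` {1..k} \<union> Inr ` {1..k} \<subseteq> K"
  shows "stopped_discounted_surplus u r k (restrict x K) = stopped_discounted_surplus u r k x"
  using assms
proof (induction k)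
  case (Suc k)
  have IH: "stopped_discounted_surplus u r k (restrict x K) = stopped_discounted_surplus u r k x"
    using Suc.prems by (intro Suc.IH) auto
  have "net_claim r (restrict x K) (Suc k) = net_claim r x (Suc k)"
    using Suc.prems by (auto simp: net_claim_def image_subset_iff)
  then show ?case by (simp only: stopped_discounted_surplus.simps IH)
qed simp

lemma stopped_discounted_surplus_eq_surplus:
  assumes "0 \<le> u" "0 < 1 + r"
  shows "if \<forall>k\<in>{1..n}. 0 \<le> surplus u r X Y k \<omega>
         then stopped_discounted_surplus u r n (\<lambda>i. case_sum X Y i \<omega>) = (1 / (1 + r)) ^ n * surplus u r X Y n \<omega>
         else stopped_discounted_surplus u r n (\<lambda>i. case_sum X Y i \<omega>) < 0"
proof (induction n)
  case (Suc n)
  let ?S = "\<lambda>n. stopped_discounted_surplus u r n (\<lambda>i. case_sum X Y i \<omega>)" and ?v = "1 / (1 + r)"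
  show ?case
  proof (cases "\<forall>k\<in>{1..n}. 0 \<le> surplus u r X Y k \<omega>")
    case True
    with Suc.IH have S: "?S n = ?v ^ n * surplus u r X Y n \<omega>" by simp
    have "0 \<le> surplus u r X Y n \<omega>"
      using True \<open>0 \<le> u\<close> by (cases "n = 0") auto
    with S have "\<not> ?S n < 0"
      using \<open>0 < 1 + r\<close> by (simp add: not_less)
    then have "?S (Suc n) = ?S n - ?v ^ n * (Y (Suc n) \<omega> / (1 + r) - X (Suc n) \<omega>)"
      by (simp add: net_claim_def)
    also have "\<dots> = ?v ^ Suc n * surplus u r X Y (Suc n) \<omega>"
    proof -
      have "?v * ((surplus u r X Y n \<omega> + X (Suc n) \<omega>) * (1 + r) - Y (Suc n) \<omega>)
          = surplus u r X Y n \<omega> - (Y (Suc n) \<omega> / (1 + r) - X (Suc n) \<omega>)"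
        using \<open>0 < 1 + r\<close> by (simp add: field_simps)
      then show ?thesis
        unfolding S by (simp only: surplus.simps power_Suc2 mult.assoc right_diff_distrib[symmetric])
    qed
    finally have "?S (Suc n) = ?v ^ Suc n * surplus u r X Y (Suc n) \<omega>" .
    moreover have "(\<forall>k\<in>{1..Suc n}. 0 \<le> surplus u r X Y k \<omega>) \<longleftrightarrow> 0 \<le> surplus u r X Y (Suc n) \<omega>"
      using True by (simp add: atLeastAtMostSuc_conv del: surplus.simps)
    ultimately show ?thesis
      using \<open>0 < 1 + r\<close>
      by (simp add: mult_less_0_iff divide_less_0_iff del: surplus.simps stopped_discounted_surplus.simps)
  next
    case False
    with Suc.IH show ?thesis by auto
  qed
qed (use assms in simp)

corollary stopped_discounted_surplus_neg_iff:
  assumes "0 \<le> u" "0 < 1 + r"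
  shows "stopped_discounted_surplus u r n (\<lambda>i. case_sum X Y i \<omega>) < 0 \<longleftrightarrow> (\<exists>k\<in>{1..n}. surplus u r X Y k \<omega> < 0)"
proof (cases "\<forall>k\<in>{1..n}. 0 \<le> surplus u r X Y k \<omega>")
  case True
  then have "0 \<le> surplus u r X Y n \<omega>"
    using \<open>0 \<le> u\<close> by (cases "n = 0") auto
  with True show ?thesis
    using stopped_discounted_surplus_eq_surplus[OF assms, of n X Y \<omega>] \<open>0 < 1 + r\<close>
    by (auto simp: mult_less_0_iff)
next
  case False
  then have "stopped_discounted_surplus u r n (\<lambda>i. case_sum X Y i \<omega>) < 0"
    using stopped_discounted_surplus_eq_surplus[OF assms, of n X Y \<omega>] by simp
  with False show ?thesis by (auto simp: not_le)
qed

lemma (in prob_space) nn_integral_stopped_discounted_surplus_mult_net_claim: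
  fixes V :: "nat + nat \<Rightarrow> 'a \<Rightarrow> real" and f g :: "real \<Rightarrow> ennreal"
  assumes indep: "indep_vars (\<lambda>_. borel) V (Inl ` {1..} \<union> Inr ` {1..})"
    and [measurable]: "f \<in> borel_measurable borel" "g \<in> borel_measurable borel"
  shows "(\<integral>\<^sup>+\<omega>. f (stopped_discounted_surplus u r k (\<lambda>i. V i \<omega>)) * g (net_claim r (\<lambda>i. V i \<omega>) (Suc k)) \<partial>M)
       = (\<integral>\<^sup>+\<omega>. f (stopped_discounted_surplus u r k (\<lambda>i. V i \<omega>)) \<partial>M)
         * (\<integral>\<^sup>+\<omega>. g (net_claim r (\<lambda>i. V i \<omega>) (Suc k)) \<partial>M)"
proof (rule indep_vars_nn_integral_mult[OF indep])
  let ?past = "Inl ` {1..k} \<union> Inr ` {1..k}" and ?present = "{Inl (Suc k), Inr (Suc k)}"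
  have "stopped_discounted_surplus u r k \<in> borel_measurable (PiM ?past (\<lambda>_. borel))"
    using measurable_stopped_discounted_surplus[where x="\<lambda>x. x" and N="PiM ?past (\<lambda>_. borel)"] by simp
  then show "(\<lambda>x. f (stopped_discounted_surplus u r k x)) \<in> borel_measurable (PiM ?past (\<lambda>_. borel))"
    by measurable
  show "(\<lambda>x. g (net_claim r x (Suc k))) \<in> borel_measurable (PiM ?present (\<lambda>_. borel))"
    unfolding net_claim_def by measurable
  show "f (stopped_discounted_surplus u r k (restrict x ?past)) = f (stopped_discounted_surplus u r k x)" for x
    by (simp add: stopped_discounted_surplus_restrict)
  show "g (net_claim r (restrict x ?present) (Suc k)) = g (net_claim r x (Suc k))" for x
    by (simp add: net_claim_def)
qed auto

lemma (in prob_space) nn_integral_exp_stopped_discounted_surplus_Suc_le: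
  fixes V :: "nat + nat \<Rightarrow> 'a \<Rightarrow> real"
  assumes indep: "indep_vars (\<lambda>_. borel) V (Inl ` {1..} \<union> Inr ` {1..})"
    and "0 \<le> r"
    and adjustment: "(\<integral>\<^sup>+\<omega>. exp (R * net_claim r (\<lambda>i. V i \<omega>) (Suc k)) \<partial>M) \<le> 1"
  shows "(\<integral>\<^sup>+\<omega>. exp (- R * stopped_discounted_surplus u r (Suc k) (\<lambda>i. V i \<omega>)) \<partial>M)
       \<le> (\<integral>\<^sup>+\<omega>. exp (- R * stopped_discounted_surplus u r k (\<lambda>i. V i \<omega>)) \<partial>M)"
proof -
  let ?S = "\<lambda>\<omega>. stopped_discounted_surplus u r k (\<lambda>i. V i \<omega>)"
    and ?Z = "\<lambda>\<omega>. net_claim r (\<lambda>i. V i \<omega>) (Suc k)"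
  define t where "t = (1 / (1 + r)) ^ k"
  have t: "0 \<le> t" "t \<le> 1"
    using \<open>0 \<le> r\<close> by (auto simp: t_def power_le_one)
  define ruined where "ruined s = (if s < 0 then ennreal (exp (- R * s)) else 0)" for s :: real
  define solvent where "solvent s = (if s < 0 then 0 else ennreal (exp (- R * s)))" for s :: real
  have [measurable]: "ruined \<in> borel_measurable borel" "solvent \<in> borel_measurable borel"
    unfolding ruined_def solvent_def by measurable
  have V: "V i \<in> borel_measurable M" if "i \<in> Inl ` {1..} \<union> Inr ` {1..}" for i
    using indep that by (simp add: indep_vars_def)
  have [measurable]: "V (Inl (Suc k)) \<in> borel_measurable M" "V (Inr (Suc k)) \<in> borel_measurable M"
    by (auto intro: V)
  have [measurable]: "?S \<in> borel_measurable M" "?Z \<in> borel_measurable M"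
    by (auto intro!: measurable_stopped_discounted_surplus V simp: net_claim_def)
  have "(\<integral>\<^sup>+\<omega>. solvent (?S \<omega>) * exp (t * (R * ?Z \<omega>)) \<partial>M)
      = (\<integral>\<^sup>+\<omega>. solvent (?S \<omega>) \<partial>M) * (\<integral>\<^sup>+\<omega>. exp (t * (R * ?Z \<omega>)) \<partial>M)"
    by (rule nn_integral_stopped_discounted_surplus_mult_net_claim[OF indep]) auto
  also have "\<dots> \<le> (\<integral>\<^sup>+\<omega>. solvent (?S \<omega>) \<partial>M)"
    using nn_integral_exp_mult_le_one[of "\<lambda>\<omega>. R * ?Z \<omega>", OF _ adjustment t] mult_left_mono[of _ 1]
    by fastforce
  finally have solvent_step:
    "(\<integral>\<^sup>+\<omega>. solvent (?S \<omega>) * exp (t * (R * ?Z \<omega>)) \<partial>M) \<le> (\<integral>\<^sup>+\<omega>. solvent (?S \<omega>) \<partial>M)" .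
  have "exp (- R * stopped_discounted_surplus u r (Suc k) (\<lambda>i. V i \<omega>))
      = ruined (?S \<omega>) + solvent (?S \<omega>) * exp (t * (R * ?Z \<omega>))" for \<omega>
    by (simp add: ruined_def solvent_def t_def ennreal_mult[symmetric] exp_add[symmetric] algebra_simps)
  moreover have "exp (- R * ?S \<omega>) = ruined (?S \<omega>) + solvent (?S \<omega>)" for \<omega>
    by (simp add: ruined_def solvent_def)
  ultimately show ?thesis
    using solvent_step by (simp add: nn_integral_add add_left_mono)
qed

lemma (in prob_space) nn_integral_exp_stopped_discounted_surplus_le:
  fixes V :: "nat + nat \<Rightarrow> 'a \<Rightarrow> real"
  assumes indep: "indep_vars (\<lambda>_. borel) V (Inl ` {1..} \<union> Inr ` {1..})"
    and r_nonneg: "0 \<le> r"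
    and adjustment: "\<And>n. 1 \<le> n \<Longrightarrow> (\<integral>\<^sup>+\<omega>. exp (R * net_claim r (\<lambda>i. V i \<omega>) n) \<partial>M) \<le> 1"
  shows "(\<integral>\<^sup>+\<omega>. exp (- R * stopped_discounted_surplus u r n (\<lambda>i. V i \<omega>)) \<partial>M) \<le> exp (- R * u)"
proof (induction n)
  case 0
  show ?case by (simp add: emeasure_space_1)
next
  case (Suc n)
  have "1 \<le> Suc n" by simp
  note step = nn_integral_exp_stopped_discounted_surplus_Suc_le[OF indep r_nonneg adjustment[OF this]]
  from order_trans[OF step Suc.IH] show ?case .
qed

lemma (in prob_space) emeasure_stopped_discounted_surplus_neg_le:
  fixes V :: "nat + nat \<Rightarrow> 'a \<Rightarrow> real"
  assumes indep: "indep_vars (\<lambda>_. borel) V (Inl ` {1..} \<union> Inr ` {1..})"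
    and "0 \<le> r" "0 \<le> R"
    and adjustment: "\<And>n. 1 \<le> n \<Longrightarrow> (\<integral>\<^sup>+\<omega>. exp (R * net_claim r (\<lambda>i. V i \<omega>) n) \<partial>M) \<le> 1"
  shows "emeasure M {\<omega> \<in> space M. stopped_discounted_surplus u r n (\<lambda>i. V i \<omega>) < 0} \<le> exp (- R * u)"
proof -
  let ?S = "\<lambda>\<omega>. stopped_discounted_surplus u r n (\<lambda>i. V i \<omega>)"
  have [measurable]: "?S \<in> borel_measurable M"
    using indep by (intro measurable_stopped_discounted_surplus) (auto simp: indep_vars_def)
  have "emeasure M {\<omega> \<in> space M. ?S \<omega> < 0} = (\<integral>\<^sup>+\<omega>. indicator {\<omega> \<in> space M. ?S \<omega> < 0} \<omega> \<partial>M)"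
    by simp
  also have "\<dots> \<le> (\<integral>\<^sup>+\<omega>. exp (- R * ?S \<omega>) \<partial>M)"
    using \<open>0 \<le> R\<close> by (intro nn_integral_mono) (auto simp: indicator_def mult_nonneg_nonpos)
  also have "\<dots> \<le> exp (- R * u)"
    by (rule nn_integral_exp_stopped_discounted_surplus_le[OF indep \<open>0 \<le> r\<close> adjustment])
  finally show ?thesis .
qed

lemma (in prob_space) ruin_prob_le:
  assumes "0 \<le> u" "0 < 1 + r" "0 \<le> c"
    and [measurable]: "\<And>n. 1 \<le> n \<Longrightarrow> X n \<in> borel_measurable M" "\<And>n. 1 \<le> n \<Longrightarrow> Y n \<in> borel_measurable M"
    and bound: "\<And>n. emeasure M {\<omega> \<in> space M. stopped_discounted_surplus u r n (\<lambda>i. case_sum X Y i \<omega>) < 0} \<le> c"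
  shows "ruin_prob M r X Y u \<le> c"
proof -
  let ?A = "\<lambda>n. {\<omega> \<in> space M. stopped_discounted_surplus u r n (\<lambda>i. case_sum X Y i \<omega>) < 0}"
  have ruin_event: "(\<Union>n\<in>{1..}. {\<omega> \<in> space M. surplus u r X Y n \<omega> < 0}) = (\<Union>n. ?A n)"
    by (auto simp: stopped_discounted_surplus_neg_iff[OF \<open>0 \<le> u\<close> \<open>0 < 1 + r\<close>]
        simp del: surplus.simps stopped_discounted_surplus.simps)
       (meson atLeastAtMost_iff order_refl)
  have "incseq ?A"
    by (rule incseq_SucI) auto
  moreover have "range ?A \<subseteq> sets M"
  proof -
    have "(\<lambda>\<omega>. stopped_discounted_surplus u r n (\<lambda>i. case_sum X Y i \<omega>)) \<in> borel_measurable M" for n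
      by (rule measurable_stopped_discounted_surplus) auto
    then show ?thesis by auto
  qed
  ultimately have "emeasure M (\<Union>n. ?A n) = (SUP n. emeasure M (?A n))"
    by (simp add: SUP_emeasure_incseq)
  also have "\<dots> \<le> c"
    by (rule SUP_least) (rule bound)
  finally show ?thesis
    using \<open>0 \<le> c\<close> unfolding ruin_prob_def ruin_event by (simp add: emeasure_eq_measure)
qed

lemma (in prob_space) nn_integral_exp_net_claim_eq:
  fixes V :: "nat + nat \<Rightarrow> 'a \<Rightarrow> real"
  assumes indep: "indep_vars (\<lambda>_. borel) V (Inl ` {1..} \<union> Inr ` {1..})"
    and "distr M borel (V (Inl n)) = distr M borel (V (Inl 1))"
    and "distr M borel (V (Inr n)) = distr M borel (V (Inr 1))"
    and "1 \<le> n"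
  shows "(\<integral>\<^sup>+\<omega>. exp (R * net_claim r (\<lambda>i. V i \<omega>) n) \<partial>M) = (\<integral>\<^sup>+\<omega>. exp (R * net_claim r (\<lambda>i. V i \<omega>) 1) \<partial>M)"
proof -
  have split: "ennreal (exp (R * net_claim r x m))
      = ennreal (exp (- R * x (Inl m))) * ennreal (exp (R * (x (Inr m) / (1 + r))))" for x m
    by (simp add: net_claim_def ennreal_mult[symmetric] exp_add[symmetric] algebra_simps)
  show ?thesis
    unfolding split
    using nn_integral_indep_pair_cong[OF indep, of "Inl n" "Inr n" "Inl 1" "Inr 1"
        "\<lambda>x. ennreal (exp (- R * x))" "\<lambda>y. ennreal (exp (R * (y / (1 + r))))"] assms
    by simp
qed

theorem corollary3p3:
  fixes M :: "'a measure" and X Y :: "nat \<Rightarrow> 'a \<Rightarrow> real" and r R :: real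
  assumes "prob_space M"
    and rvX: "\<And>n. n \<ge> 1 \<Longrightarrow> X n \<in> borel_measurable M"
    and rvY: "\<And>n. n \<ge> 1 \<Longrightarrow> Y n \<in> borel_measurable M"
    and nonnegX: "\<And>n \<omega>. n \<ge> 1 \<Longrightarrow> \<omega> \<in> space M \<Longrightarrow> X n \<omega> \<ge> 0"
    and nonnegY: "\<And>n \<omega>. n \<ge> 1 \<Longrightarrow> \<omega> \<in> space M \<Longrightarrow> Y n \<omega> \<ge> 0"
    and idX: "\<And>n. n \<ge> 1 \<Longrightarrow> distr M borel (X n) = distr M borel (X 1)"
    and idY: "\<And>n. n \<ge> 1 \<Longrightarrow> distr M borel (Y n) = distr M borel (Y 1)"
    and intX: "integrable M (X 1)"
    and intY: "integrable M (Y 1)"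
    and indep: "prob_space.indep_vars M (\<lambda>_. borel)
                  (\<lambda>i. case i of Inl n \<Rightarrow> X n | Inr n \<Rightarrow> Y n)
                  (Inl ` {1..} \<union> Inr ` {1..})"
    and r_pos: "r > 0"
    and R_pos: "R > 0"
    and lundberg: "(\<integral>\<^sup>+ \<omega>. ennreal (exp (R * (Y 1 \<omega> / (1 + r) - X 1 \<omega>))) \<partial>M) \<le> 1"
  shows "\<forall>u>0. ruin_prob M r X Y u \<le> exp (- R * u)"
proof (intro allI impI)
  fix u :: real
  assume "u > 0"
  interpret prob_space M by fact
  have V_indep: "indep_vars (\<lambda>_. borel) (case_sum X Y) (Inl ` {1..} \<union> Inr ` {1..})"
    using indep .
  have adjustment: "(\<integral>\<^sup>+\<omega>. exp (R * net_claim r (\<lambda>i. case_sum X Y i \<omega>) n) \<partial>M) \<le> 1"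
    if "1 \<le> n" for n
  proof -
    have "(\<integral>\<^sup>+\<omega>. exp (R * net_claim r (\<lambda>i. case_sum X Y i \<omega>) n) \<partial>M)
        = (\<integral>\<^sup>+\<omega>. exp (R * net_claim r (\<lambda>i. case_sum X Y i \<omega>) 1) \<partial>M)"
      using idX[OF that] idY[OF that] that by (intro nn_integral_exp_net_claim_eq[OF V_indep]) simp_all
    with lundberg show ?thesis by (simp add: net_claim_def)
  qed
  have "emeasure M {\<omega> \<in> space M. stopped_discounted_surplus u r n (\<lambda>i. case_sum X Y i \<omega>) < 0}
      \<le> exp (- R * u)" for n
    using emeasure_stopped_discounted_surplus_neg_le[OF V_indep _ _ adjustment] r_pos R_pos by simp
  then show "ruin_prob M r X Y u \<le> exp (- R * u)"
    using ruin_prob_le[of u r "exp (- R * u)" X Y] \<open>u > 0\<close> r_pos rvX rvY by simp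
qed

end
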